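(* Let $\delta>0$. In the multidimensional knapsack problem, if $q_{\max}:=\max_{i,j}w_{ij}/B_j\le\delta/m$, then the deterministic rounding algorithm returns an integral allocation $x$ satisfying $\sum_ix_iv_i\ge(1-\delta)\sum_ix_i^*v_i$ (and $\sum_iw_{ij}x_i\le B_j$ for all $j$).
   Context: Multidimensional knapsack: a finite set of items $i$, each with value $v_i\ge0$ and weight vector $(w_{i1},\dots,w_{im})\in\mathbb{R}_+^m$, and capacities $B_1,\dots,B_m>0$. The LP relaxation maximizes $\sum_iv_ix_i$ subject to $0\le x_i\le1$ for all $i$ and $\sum_iw_{ij}x_i\le B_j$ for all $j$. Deterministic rounding algorithm: compute a basic (vertex) optimal solution $x^*$ of this LP, and output $x_i=1$ if $x_i^*=1$ and $x_i=0$ otherwise. *)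

theory Defs
  imports "HOL-Analysis.Analysis"
begin

text \<open>Items are indexed by a finite type 'n, the
  m resource constraints by a finite type 'm (so m = CARD('m)).
  v i = value of item i, w i j = weight of item i in dimension j, B j = capacity.\<close>

definition knapsack_LP_polytope ::
  "('n::finite \<Rightarrow> 'm::finite \<Rightarrow> real) \<Rightarrow> ('m \<Rightarrow> real) \<Rightarrow> (real ^ 'n) set" where
  "knapsack_LP_polytope w B =
     {x. (\<forall>i. 0 \<le> x $ i \<and> x $ i \<le> 1) \<and> (\<forall>j. (\<Sum>i\<in>UNIV. w i j * x $ i) \<le> B j)}"

definition LP_value :: "('n::finite \<Rightarrow> real) \<Rightarrow> real ^ 'n \<Rightarrow> real" where
  "LP_value v x = (\<Sum>i\<in>UNIV. v i * x $ i)"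

definition basic_optimal_solution ::
  "('n::finite \<Rightarrow> real) \<Rightarrow> ('n \<Rightarrow> 'm::finite \<Rightarrow> real) \<Rightarrow> ('m \<Rightarrow> real) \<Rightarrow> real ^ 'n \<Rightarrow> bool" where
  "basic_optimal_solution v w B xs \<longleftrightarrow>
     xs extreme_point_of knapsack_LP_polytope w B \<and>
     (\<forall>y \<in> knapsack_LP_polytope w B. LP_value v y \<le> LP_value v xs)"

definition round_down :: "real ^ 'n \<Rightarrow> 'n \<Rightarrow> real" where
  "round_down xs i = (if xs $ i = 1 then 1 else 0)"

end

theory Submission
  imports Defs
begin

(* At a vertex x* of the LP polytope at most m coordinates are fractional: more than m of
   them would leave room for a nonzero direction d, supported on the fractional coordinates,
   with \<Sum>i w i j * d i = 0 for every j, and then x* + t d and x* - t d would both be feasible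
   for small t > 0. For a fractional item i, optimality of x* gives v i \<le> (\<delta>/m) OPT: raising
   x*_i to 1 while scaling all of x* by 1 - (\<delta>/m)(1 - x*_i) keeps every load within its
   capacity because w i j \<le> (\<delta>/m) B j. Rounding down loses only the fractional items, i.e.
   at most m (\<delta>/m) OPT, and it never increases a load. *)

lemma linear_kernel_nontrivial_if_dim_gt:
  fixes f :: "'a::euclidean_space \<Rightarrow> 'b::euclidean_space"
  assumes "linear f" and "subspace S" and "dim S > DIM('b)"
  shows "\<exists>x\<in>S. x \<noteq> 0 \<and> f x = 0"
proof (rule ccontr)
  assume "\<not> ?thesis"
  then have "inj_on f S"
    using linear_inj_on_iff_eq_0[OF assms(1,2)] by blast
  then have "dim (f ` S) = dim S"
    using dim_image_eq[OF assms(1)] \<open>subspace S\<close> by (metis span_eq_iff)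
  moreover have "dim (f ` S) \<le> DIM('b)"
    by (rule dim_subset_UNIV)
  ultimately show False
    using assms(3) by simp
qed

lemma exists_kernel_vector_supported_on:
  fixes w :: "'n::finite \<Rightarrow> 'm::finite \<Rightarrow> real"
  assumes "card F > CARD('m)"
  shows "\<exists>d::real^'n. d \<noteq> 0 \<and> (\<forall>i. i \<notin> F \<longrightarrow> d $ i = 0) \<and> (\<forall>j. (\<Sum>i\<in>UNIV. w i j * d $ i) = 0)"
proof -
  let ?S = "{d::real^'n. \<forall>i. i \<notin> F \<longrightarrow> d $ i = 0}"
  let ?f = "\<lambda>d::real^'n. \<chi> j::'m. \<Sum>i\<in>UNIV. w i j * d $ i"
  have "linear ?f"
    by (auto simp: linear_iff vec_eq_iff sum.distrib sum_distrib_left algebra_simps)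
  moreover have "subspace ?S"
    by (auto simp: subspace_def)
  moreover have "dim ?S > DIM(real^'m)"
    using assms dim_substandard_cart[where 'a=real and d=F] by (simp add: dim_vec_eq)
  ultimately show ?thesis
    by (auto dest!: linear_kernel_nontrivial_if_dim_gt simp: vec_eq_iff)
qed

lemma extreme_point_of_symmetric_displacement_eq_0:
  assumes "x extreme_point_of S" and "x + d \<in> S" and "x - d \<in> S"
  shows "d = 0"
proof (rule ccontr)
  assume "d \<noteq> 0"
  have "x + d \<noteq> x - d"
  proof
    assume "x + d = x - d"
    then have "2 *\<^sub>R d = 0"
      by (simp add: scaleR_2 algebra_simps)
    with \<open>d \<noteq> 0\<close> show False
      by simp
  qed
  moreover have "midpoint (x + d) (x - d) = x"
    by (simp add: midpoint_def algebra_simps flip: scaleR_2)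
  ultimately have "x \<in> open_segment (x + d) (x - d)"
    by (metis midpoint_in_open_segment)
  then show False
    using assms unfolding extreme_point_of_def by blast
qed

lemma extreme_point_card_fractional_coordinates_le:
  fixes w :: "'n::finite \<Rightarrow> 'm::finite \<Rightarrow> real"
  assumes extreme: "x extreme_point_of knapsack_LP_polytope w B"
  shows "card {i. 0 < x $ i \<and> x $ i < 1} \<le> CARD('m)"
proof (rule ccontr)
  define F where "F = {i. 0 < x $ i \<and> x $ i < 1}"
  let ?P = "knapsack_LP_polytope w B"
  assume "\<not> ?thesis"
  then obtain d :: "real^'n" where "d \<noteq> 0" and supp: "\<And>i. i \<notin> F \<Longrightarrow> d $ i = 0"
    and kernel: "\<And>j. (\<Sum>i\<in>UNIV. w i j * d $ i) = 0"
    using exists_kernel_vector_supported_on[of F w] by (auto simp: F_def)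
  have "x \<in> ?P"
    using extreme by (simp add: extreme_point_of_def)
  define U where "U = {y::real^'n. \<forall>i\<in>F. 0 < y $ i \<and> y $ i < 1}"
  have "open U"
  proof -
    have "U = (\<Inter>i\<in>F. {y. y $ i > 0} \<inter> {y. y $ i < 1})"
      by (auto simp: U_def)
    then show ?thesis
      by (simp add: open_INT open_Int open_halfspace_component_gt_cart open_halfspace_component_lt_cart)
  qed
  moreover have "x \<in> U" and "((\<lambda>t::real. x + t *\<^sub>R d) \<longlongrightarrow> x) (nhds 0)"
    by (auto simp: U_def F_def intro!: tendsto_eq_intros filterlim_ident)
  ultimately have "\<forall>\<^sub>F t in nhds 0. x + t *\<^sub>R d \<in> U"
    by (metis topological_tendstoD)
  then obtain e :: real where "e > 0" and near: "\<And>t. dist t 0 < e \<Longrightarrow> x + t *\<^sub>R d \<in> U"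
    by (auto simp: eventually_nhds_metric)
  have in_P: "x + t *\<^sub>R d \<in> ?P" if "dist t 0 < e" for t
  proof -
    have "0 \<le> x $ i + t * d $ i \<and> x $ i + t * d $ i \<le> 1" for i
      using near[OF that] supp[of i] \<open>x \<in> ?P\<close>
      by (cases "i \<in> F") (auto simp: U_def knapsack_LP_polytope_def)
    moreover have "(\<Sum>i\<in>UNIV. w i j * (x $ i + t * d $ i)) \<le> B j" for j
    proof -
      have "(\<Sum>i\<in>UNIV. w i j * (x $ i + t * d $ i))
          = (\<Sum>i\<in>UNIV. w i j * x $ i) + t * (\<Sum>i\<in>UNIV. w i j * d $ i)"
        by (simp add: algebra_simps sum.distrib sum_distrib_left)
      then show ?thesis
        using kernel[of j] \<open>x \<in> ?P\<close> by (simp add: knapsack_LP_polytope_def)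
    qed
    ultimately show ?thesis
      by (simp add: knapsack_LP_polytope_def)
  qed
  have "(e / 2) *\<^sub>R d = 0"
    using extreme in_P[of "e / 2"] in_P[of "- e / 2"] \<open>e > 0\<close>
    by (intro extreme_point_of_symmetric_displacement_eq_0) auto
  then show False
    using \<open>d \<noteq> 0\<close> \<open>e > 0\<close> by simp
qed

lemma sum_mult_scaleR_add_axis:
  fixes c :: "'n::finite \<Rightarrow> real"
  shows "(\<Sum>k\<in>UNIV. c k * (a *\<^sub>R x + b *\<^sub>R axis i 1) $ k) = a * (\<Sum>k\<in>UNIV. c k * x $ k) + b * c i"
proof -
  have "c k * (a *\<^sub>R x + b *\<^sub>R axis i 1) $ k = a * (c k * x $ k) + (if k = i then b * c i else 0)" for k
    by (simp add: axis_def algebra_simps)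
  then show ?thesis
    by (simp add: sum.distrib sum_distrib_left)
qed

lemma item_value_le_LP_optimum:
  fixes v :: "'n::finite \<Rightarrow> real" and w :: "'n \<Rightarrow> 'm::finite \<Rightarrow> real" and \<theta> :: real
  assumes feasible: "x \<in> knapsack_LP_polytope w B"
    and optimal: "\<forall>y \<in> knapsack_LP_polytope w B. LP_value v y \<le> LP_value v x"
    and "x $ i < 1" and "0 \<le> \<theta>" and "\<theta> \<le> 1" and small: "\<forall>j. w i j \<le> \<theta> * B j"
  shows "v i \<le> \<theta> * LP_value v x"
proof -
  define s where "s = 1 - x $ i"
  define y where "y = (1 - \<theta> * s) *\<^sub>R x + s *\<^sub>R axis i 1"
  have x01: "0 \<le> x $ k" "x $ k \<le> 1" for k
    using feasible by (auto simp: knapsack_LP_polytope_def)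
  have s: "0 < s" "s \<le> 1"
    using \<open>x $ i < 1\<close> x01[of i] by (auto simp: s_def)
  have "\<theta> * s \<le> 1"
    using s \<open>0 \<le> \<theta>\<close> \<open>\<theta> \<le> 1\<close> by (simp add: mult_le_one)
  have "y \<in> knapsack_LP_polytope w B"
  proof -
    have "0 \<le> y $ k \<and> y $ k \<le> 1" for k
    proof -
      have "0 \<le> (1 - \<theta> * s) * x $ k" "(1 - \<theta> * s) * x $ k \<le> x $ k"
        using \<open>\<theta> * s \<le> 1\<close> \<open>0 \<le> \<theta>\<close> s x01[of k] by (simp_all add: mult_left_le_one_le)
      then show ?thesis
        using x01[of k] s by (auto simp: y_def axis_def s_def)
    qed
    moreover have "(\<Sum>k\<in>UNIV. w k j * y $ k) \<le> B j" for j
    proof -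
      have "(\<Sum>k\<in>UNIV. w k j * y $ k) = (1 - \<theta> * s) * (\<Sum>k\<in>UNIV. w k j * x $ k) + s * w i j"
        unfolding y_def by (rule sum_mult_scaleR_add_axis)
      also have "\<dots> \<le> (1 - \<theta> * s) * B j + s * (\<theta> * B j)"
        using feasible \<open>\<theta> * s \<le> 1\<close> s small
        by (intro add_mono mult_left_mono) (auto simp: knapsack_LP_polytope_def)
      also have "\<dots> = B j"
        by (simp add: algebra_simps)
      finally show ?thesis .
    qed
    ultimately show ?thesis
      by (simp add: knapsack_LP_polytope_def)
  qed
  then have "LP_value v y \<le> LP_value v x"
    using optimal by blast
  then have "(1 - \<theta> * s) * LP_value v x + s * v i \<le> LP_value v x"
    unfolding y_def LP_value_def sum_mult_scaleR_add_axis .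
  then have "s * v i \<le> s * (\<theta> * LP_value v x)"
    by (simp add: algebra_simps)
  then show ?thesis
    using s by simp
qed

lemma LP_value_nonneg:
  assumes "x \<in> knapsack_LP_polytope w B" and "\<forall>i. 0 \<le> v i"
  shows "0 \<le> LP_value v x"
  using assms by (auto simp: LP_value_def knapsack_LP_polytope_def intro: sum_nonneg)

lemma fractional_value_le:
  fixes v :: "'n::finite \<Rightarrow> real" and w :: "'n \<Rightarrow> 'm::finite \<Rightarrow> real" and \<theta> :: real
  assumes basic: "basic_optimal_solution v w B x"
    and "\<forall>i. 0 \<le> v i" and "0 \<le> \<theta>" and "\<theta> \<le> 1" and small: "\<forall>i j. w i j \<le> \<theta> * B j"
  shows "(\<Sum>i | 0 < x $ i \<and> x $ i < 1. x $ i * v i) \<le> CARD('m) * \<theta> * LP_value v x"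
proof -
  define F where "F = {i. 0 < x $ i \<and> x $ i < 1}"
  have extreme: "x extreme_point_of knapsack_LP_polytope w B"
    and optimal: "\<forall>y \<in> knapsack_LP_polytope w B. LP_value v y \<le> LP_value v x"
    using basic by (auto simp: basic_optimal_solution_def)
  then have feasible: "x \<in> knapsack_LP_polytope w B"
    by (simp add: extreme_point_of_def)
  have "(\<Sum>i\<in>F. x $ i * v i) \<le> (\<Sum>i\<in>F. \<theta> * LP_value v x)"
  proof (rule sum_mono)
    fix i assume "i \<in> F"
    then have "x $ i * v i \<le> v i"
      using \<open>\<forall>i. 0 \<le> v i\<close> by (simp add: F_def mult_left_le_one_le)
    also have "v i \<le> \<theta> * LP_value v x"
      using \<open>i \<in> F\<close> small \<open>0 \<le> \<theta>\<close> \<open>\<theta> \<le> 1\<close>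
      by (intro item_value_le_LP_optimum[OF feasible optimal]) (auto simp: F_def)
    finally show "x $ i * v i \<le> \<theta> * LP_value v x" .
  qed
  also have "\<dots> = card F * \<theta> * LP_value v x"
    by simp
  also have "\<dots> \<le> CARD('m) * \<theta> * LP_value v x"
    using extreme_point_card_fractional_coordinates_le[OF extreme] \<open>0 \<le> \<theta>\<close>
      LP_value_nonneg[OF feasible \<open>\<forall>i. 0 \<le> v i\<close>]
    by (intro mult_right_mono) (auto simp: F_def)
  finally show ?thesis
    by (simp add: F_def)
qed

lemma round_down_le:
  assumes "0 \<le> x $ i"
  shows "round_down x i \<le> x $ i"
  using assms by (auto simp: round_down_def)

lemma round_down_feasible:
  fixes w :: "'n::finite \<Rightarrow> 'm::finite \<Rightarrow> real"
  assumes "x \<in> knapsack_LP_polytope w B" and "\<forall>i j. 0 \<le> w i j"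
  shows "(\<Sum>i\<in>UNIV. w i j * round_down x i) \<le> B j"
proof -
  have "(\<Sum>i\<in>UNIV. w i j * round_down x i) \<le> (\<Sum>i\<in>UNIV. w i j * x $ i)"
    using assms by (intro sum_mono mult_left_mono round_down_le) (auto simp: knapsack_LP_polytope_def)
  also have "\<dots> \<le> B j"
    using assms(1) by (simp add: knapsack_LP_polytope_def)
  finally show ?thesis .
qed

lemma LP_value_eq_round_down_plus_fractional:
  assumes "x \<in> knapsack_LP_polytope w B"
  shows "LP_value v x
    = (\<Sum>i\<in>UNIV. round_down x i * v i) + (\<Sum>i | 0 < x $ i \<and> x $ i < 1. x $ i * v i)"
proof -
  have "LP_value v x
    = (\<Sum>i\<in>UNIV. round_down x i * v i + (if 0 < x $ i \<and> x $ i < 1 then x $ i * v i else 0))"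
    unfolding LP_value_def
  proof (rule sum.cong)
    fix i
    have "0 \<le> x $ i" "x $ i \<le> 1"
      using assms by (auto simp: knapsack_LP_polytope_def)
    then show "v i * x $ i
      = round_down x i * v i + (if 0 < x $ i \<and> x $ i < 1 then x $ i * v i else 0)"
      by (auto simp: round_down_def)
  qed simp
  then show ?thesis
    by (simp add: sum.distrib sum.If_cases)
qed

lemma round_down_value_ge:
  fixes v :: "'n::finite \<Rightarrow> real" and w :: "'n \<Rightarrow> 'm::finite \<Rightarrow> real" and \<theta> :: real
  assumes basic: "basic_optimal_solution v w B x"
    and "\<forall>i. 0 \<le> v i" and "0 \<le> \<theta>" and small: "\<forall>i j. w i j \<le> \<theta> * B j"
  shows "(1 - CARD('m) * \<theta>) * LP_value v x \<le> (\<Sum>i\<in>UNIV. round_down x i * v i)"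
proof -
  have feasible: "x \<in> knapsack_LP_polytope w B"
    using basic by (simp add: basic_optimal_solution_def extreme_point_of_def)
  show ?thesis
  proof (cases "\<theta> \<le> 1")
    case True
    then show ?thesis
      using fractional_value_le[OF basic \<open>\<forall>i. 0 \<le> v i\<close> \<open>0 \<le> \<theta>\<close> True small]
        LP_value_eq_round_down_plus_fractional[OF feasible, of v]
      by (simp add: algebra_simps)
  next
    case False
    have "1 * \<theta> \<le> CARD('m) * \<theta>"
      using \<open>0 \<le> \<theta>\<close> by (intro mult_right_mono) simp_all
    then have "1 \<le> CARD('m) * \<theta>"
      using False by linarith
    then have "(1 - CARD('m) * \<theta>) * LP_value v x \<le> 0"
      using LP_value_nonneg[OF feasible \<open>\<forall>i. 0 \<le> v i\<close>] by (simp add: mult_nonpos_nonneg)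
    also have "0 \<le> (\<Sum>i\<in>UNIV. round_down x i * v i)"
      using \<open>\<forall>i. 0 \<le> v i\<close> by (auto simp: round_down_def intro: sum_nonneg)
    finally show ?thesis .
  qed
qed

theorem lemma4:
  fixes v :: "'n::finite \<Rightarrow> real" and w :: "'n \<Rightarrow> 'm::finite \<Rightarrow> real"
    and B :: "'m \<Rightarrow> real" and \<delta> :: real and xs :: "real ^ 'n"
  assumes "\<delta> > 0"
    and "\<forall>i. v i \<ge> 0"
    and "\<forall>i j. w i j \<ge> 0"
    and "\<forall>j. B j > 0"
    and "\<forall>i j. w i j / B j \<le> \<delta> / real CARD('m)"
    and "basic_optimal_solution v w B xs"
  shows "(\<Sum>i\<in>UNIV. round_down xs i * v i) \<ge> (1 - \<delta>) * (\<Sum>i\<in>UNIV. xs $ i * v i)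
         \<and> (\<forall>j. (\<Sum>i\<in>UNIV. w i j * round_down xs i) \<le> B j)"
proof -
  have feasible: "xs \<in> knapsack_LP_polytope w B"
    using assms(6) by (simp add: basic_optimal_solution_def extreme_point_of_def)
  have "\<forall>i j. w i j \<le> \<delta> / real CARD('m) * B j"
    using assms(4,5) by (simp add: pos_divide_le_eq)
  then have "(1 - \<delta>) * LP_value v xs \<le> (\<Sum>i\<in>UNIV. round_down xs i * v i)"
    using round_down_value_ge[OF assms(6,2), of "\<delta> / real CARD('m)"] assms(1) by simp
  then show ?thesis
    using round_down_feasible[OF feasible assms(3)] by (simp add: LP_value_def mult.commute)
qed

end
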